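(* Let $f\colon\mathbb{R}^n\to\mathbb{R}$ be convex and differentiable with $\|\nabla f(x)-\nabla f(y)\|\le L\|x-y\|$ for all $x,y$ (Euclidean norm, $L>0$), and assume $f$ has a minimizer $x_\star$; write $f_\star=f(x_\star)$. Let $\{\theta_k\}_{k=0}^\infty$ be a positive sequence with $\theta_0=1$ and $0\le\theta_{k+1}^2-\theta_{k+1}\le\theta_k^2$ for $k=0,1,\dots$, and set $\theta_{-1}=0$. Let $\{\varphi_k\}_{k=0}^\infty$ be a positive sequence with $0\le\varphi_k^2-\varphi_k\le2\theta_{k-1}^2$ for $k=0,1,\dots$. Given $x_0\in\mathbb{R}^n$, let $y_0=x_0$, $\tilde x_0=x_0$, and for $k=0,1,\dots$ \[ y_{k+1}=x_k-\tfrac1L\nabla f(x_k),\qquad x_{k+1}=y_{k+1}+\frac{\theta_k-1}{\theta_{k+1}}(y_{k+1}-y_k)+\frac{\theta_k}{\theta_{k+1}}(y_{k+1}-x_k), \] \[ \tilde x_{k+1}=y_{k+1}+\frac{\theta_k-1}{\varphi_{k+1}}(y_{k+1}-y_k)+\frac{\theta_k}{\varphi_{k+1}}(y_{k+1}-x_k). \] Then for $k=0,1,\dots$, \[ f(\tilde x_k)-f_\star\le\frac{L\|x_0-x_\star\|^2}{2\varphi_k^2}. \]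
   Context: The $\tilde x_k$ are the secondary iterates of OGM with the "last-step modification". $\|\cdot\|$ is the Euclidean norm. *)

theory Defs
  imports "HOL-Analysis.Analysis"
begin

end

theory Submission
  imports Defs
begin

text \<open>For convex \<open>f\<close> with \<open>L\<close>-Lipschitz gradient \<open>g\<close>
  one has the interpolation inequality \<open>f v \<le> f u + g v \<bullet> (v - u) - \<parallel>g u - g v\<parallel>\<^sup>2 / (2 L)\<close>.
  The points \<open>z k = \<theta> k x k - (\<theta> k - 1) y k\<close> satisfy \<open>z (k+1) = z k - (2 \<theta> k / L) g (x k)\<close>,
  and adding the interpolation inequalities at \<open>x (k+1)\<close> against \<open>xs\<close> and against \<open>x k\<close>,
  weighted by \<open>\<theta> (k+1)\<close> and \<open>\<theta> (k+1)\<^sup>2 - \<theta> (k+1) \<le> \<theta> k\<^sup>2\<close>, shows that the potential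
  \<open>2 \<theta> k\<^sup>2 (f (x k) - f xs - \<parallel>g (x k)\<parallel>\<^sup>2 / (2 L)) + L/2 \<parallel>z (k+1) - xs\<parallel>\<^sup>2\<close> is nonincreasing;
  it starts below \<open>L/2 \<parallel>x 0 - xs\<parallel>\<^sup>2\<close>. Since \<open>\<phi> xt (k+1) = (\<phi> - 1) y (k+1) + z (k+1)\<close> for
  \<open>\<phi> = \<phi> (k+1)\<close>, the same two inequalities at \<open>xt (k+1)\<close>, weighted by \<open>\<phi>\<close> and
  \<open>\<phi>\<^sup>2 - \<phi> \<le> 2 \<theta> k\<^sup>2\<close>, bound \<open>\<phi>\<^sup>2 (f (xt (k+1)) - f xs)\<close> by that potential.\<close>

lemma has_real_derivative_along_line:
  fixes F :: "'a::real_inner \<Rightarrow> real"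
  assumes gradient: "\<And>z. (F has_derivative (\<lambda>h. G z \<bullet> h)) (at z)"
  shows "((\<lambda>s. F (v + s *\<^sub>R d)) has_real_derivative G (v + t *\<^sub>R d) \<bullet> d) (at t)"
proof -
  have "((\<lambda>s. v + s *\<^sub>R d) has_derivative (\<lambda>s. s *\<^sub>R d)) (at t)"
    by (auto intro!: derivative_eq_intros)
  from has_derivative_compose[OF this gradient]
  show ?thesis
    by (simp add: has_field_derivative_def o_def mult_commute_abs)
qed

lemma convex_on_gradient_inequality:
  fixes F :: "'a::real_inner \<Rightarrow> real"
  assumes convex: "convex_on UNIV F"
    and gradient: "\<And>z. (F has_derivative (\<lambda>h. G z \<bullet> h)) (at z)"
  shows "F v + G v \<bullet> (u - v) \<le> F u"
proof -
  define \<gamma> where "\<gamma> = (\<lambda>t. F (v + t *\<^sub>R (u - v)))"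
  have "convex_on UNIV \<gamma>"
  proof (rule convex_onI)
    fix t a b :: real
    assume "0 < t" "t < 1"
    moreover have "v + ((1 - t) * a + t * b) *\<^sub>R (u - v)
        = (1 - t) *\<^sub>R (v + a *\<^sub>R (u - v)) + t *\<^sub>R (v + b *\<^sub>R (u - v))"
      by (simp add: algebra_simps)
    ultimately show "\<gamma> ((1 - t) *\<^sub>R a + t *\<^sub>R b) \<le> (1 - t) * \<gamma> a + t * \<gamma> b"
      using convex_onD[OF convex, of t] by (simp add: \<gamma>_def)
  qed simp
  moreover have "(\<gamma> has_real_derivative G v \<bullet> (u - v)) (at 0 within UNIV)"
    using has_real_derivative_along_line[OF gradient, of v "u - v" 0] by (simp add: \<gamma>_def)
  ultimately have "\<gamma> 1 - \<gamma> 0 \<ge> G v \<bullet> (u - v) * (1 - 0)"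
    by (intro convex_on_imp_above_tangent) auto
  then show ?thesis
    by (simp add: \<gamma>_def)
qed

lemma lipschitz_gradient_upper_bound:
  fixes F :: "'a::real_inner \<Rightarrow> real"
  assumes gradient: "\<And>z. (F has_derivative (\<lambda>h. G z \<bullet> h)) (at z)"
    and lipschitz: "\<And>a b. norm (G a - G b) \<le> L * norm (a - b)"
  shows "F u \<le> F v + G v \<bullet> (u - v) + L / 2 * (norm (u - v))\<^sup>2"
proof -
  define d where "d = u - v"
  define \<delta> where "\<delta> t = F (v + t *\<^sub>R d) - t * (G v \<bullet> d) - L / 2 * t\<^sup>2 * (norm d)\<^sup>2" for t
  have "\<delta> 1 \<le> \<delta> 0"
  proof (rule DERIV_nonpos_imp_nonincreasing[of 0 1])
    fix t :: real
    assume "0 \<le> t" "t \<le> 1"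
    have "(\<delta> has_real_derivative G (v + t *\<^sub>R d) \<bullet> d - G v \<bullet> d - L / 2 * (2 * t) * (norm d)\<^sup>2) (at t)"
      unfolding \<delta>_def
      by (intro derivative_eq_intros) (rule has_real_derivative_along_line[OF gradient], auto)
    moreover have "G (v + t *\<^sub>R d) \<bullet> d - G v \<bullet> d \<le> L * t * (norm d)\<^sup>2"
    proof -
      have "G (v + t *\<^sub>R d) \<bullet> d - G v \<bullet> d \<le> norm (G (v + t *\<^sub>R d) - G v) * norm d"
        by (metis inner_diff_left norm_cauchy_schwarz)
      also have "\<dots> \<le> L * norm (t *\<^sub>R d) * norm d"
        using lipschitz[of "v + t *\<^sub>R d" v] by (simp add: mult_right_mono)
      finally show ?thesis
        using \<open>0 \<le> t\<close> by (simp add: power2_eq_square mult.assoc)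
    qed
    ultimately show "\<exists>y. (\<delta> has_real_derivative y) (at t) \<and> y \<le> 0"
      by fastforce
  qed simp
  then show ?thesis
    by (simp add: \<delta>_def d_def)
qed

lemma smooth_convex_interpolation:
  fixes F :: "'a::real_inner \<Rightarrow> real"
  assumes convex: "convex_on UNIV F"
    and gradient: "\<And>z. (F has_derivative (\<lambda>h. G z \<bullet> h)) (at z)"
    and lipschitz: "\<And>a b. norm (G a - G b) \<le> L * norm (a - b)"
    and "L > 0"
  shows "F v \<le> F u + G v \<bullet> (v - u) - (norm (G u - G v))\<^sup>2 / (2 * L)"
proof -
  \<comment> \<open>Apply the descent lemma to the convex function \<open>P\<close>, which is minimal at \<open>v\<close>,
    at one gradient step from \<open>u\<close>.\<close>
  define P where "P = (\<lambda>w. F w - G v \<bullet> w)"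
  define H where "H = (\<lambda>w. G w - G v)"
  have gradient_P: "(P has_derivative (\<lambda>h. H z \<bullet> h)) (at z)" for z
    unfolding P_def H_def inner_diff_left
    by (intro has_derivative_diff gradient) (auto intro: derivative_eq_intros)
  have lipschitz_H: "norm (H a - H b) \<le> L * norm (a - b)" for a b
    using lipschitz[of a b] by (simp add: H_def)
  define w where "w = u - (1 / L) *\<^sub>R H u"
  have "P v \<le> P w"
    using convex_on_gradient_inequality[OF convex gradient, of v w]
    by (simp add: P_def inner_diff_right)
  also have "\<dots> \<le> P u + H u \<bullet> (w - u) + L / 2 * (norm (w - u))\<^sup>2"
    by (rule lipschitz_gradient_upper_bound[OF gradient_P lipschitz_H])
  also have "\<dots> = P u - (norm (H u))\<^sup>2 / (2 * L)"
    using \<open>L > 0\<close> by (simp add: w_def dot_square_norm power2_eq_square field_simps)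
  finally show ?thesis
    by (simp add: P_def H_def inner_diff_right)
qed

lemma gradient_zero_at_minimum:
  fixes F :: "'a::real_inner \<Rightarrow> real"
  assumes "(F has_derivative (\<lambda>h. G v \<bullet> h)) (at v)"
    and "\<And>z. F v \<le> F z"
  shows "G v = 0"
proof -
  have "(\<lambda>h. G v \<bullet> h) = (\<lambda>h. 0)"
    using assms by (intro has_derivative_local_min) auto
  then show ?thesis
    by (metis inner_eq_zero_iff)
qed

lemma norm_diff_scaleR_power2:
  fixes a b :: "'a::real_inner"
  shows "(norm (a - c *\<^sub>R b))\<^sup>2 = (norm a)\<^sup>2 - 2 * c * (b \<bullet> a) + c\<^sup>2 * (norm b)\<^sup>2"
  unfolding power2_norm_eq_inner
  by (simp add: inner_diff_left inner_diff_right inner_commute power2_eq_square algebra_simps)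

lemma norm_gradient_step_power2:
  fixes w h :: "'a::real_inner"
  assumes "L \<noteq> 0"
  shows "L / 2 * (norm (w - (c / L) *\<^sub>R h))\<^sup>2
    = L / 2 * (norm w)\<^sup>2 - c * (h \<bullet> w) + c\<^sup>2 * ((norm h)\<^sup>2 / (2 * L))"
  unfolding norm_diff_scaleR_power2 using assms by (simp add: power2_eq_square field_simps)

locale ogm =
  fixes f :: "'a::real_inner \<Rightarrow> real" and g :: "'a \<Rightarrow> 'a"
    and L :: real and xs :: 'a
    and \<theta> :: "nat \<Rightarrow> real"
    and x y :: "nat \<Rightarrow> 'a"
  assumes convex: "convex_on UNIV f"
    and gradient: "\<And>z. (f has_derivative (\<lambda>h. g z \<bullet> h)) (at z)"
    and L_pos: "L > 0"
    and lipschitz: "\<And>u v. norm (g u - g v) \<le> L * norm (u - v)"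
    and minimizer: "\<And>z. f xs \<le> f z"
    and \<theta>_pos: "\<And>k. \<theta> k > 0"
    and \<theta>_0: "\<theta> 0 = 1"
    and \<theta>_Suc: "\<And>k. 0 \<le> (\<theta> (Suc k))\<^sup>2 - \<theta> (Suc k) \<and> (\<theta> (Suc k))\<^sup>2 - \<theta> (Suc k) \<le> (\<theta> k)\<^sup>2"
    and y_Suc: "\<And>k. y (Suc k) = x k - (1 / L) *\<^sub>R g (x k)"
    and x_Suc: "\<And>k. x (Suc k) = y (Suc k)
                  + ((\<theta> k - 1) / \<theta> (Suc k)) *\<^sub>R (y (Suc k) - y k)
                  + (\<theta> k / \<theta> (Suc k)) *\<^sub>R (y (Suc k) - x k)"
begin

definition z :: "nat \<Rightarrow> 'a" where
  "z k = \<theta> k *\<^sub>R x k - (\<theta> k - 1) *\<^sub>R y k"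

definition gap :: "nat \<Rightarrow> real" where
  "gap k = f (x k) - f xs - (norm (g (x k)))\<^sup>2 / (2 * L)"

definition potential :: "nat \<Rightarrow> real" where
  "potential k = 2 * (\<theta> k)\<^sup>2 * gap k + L / 2 * (norm (z (Suc k) - xs))\<^sup>2"

lemma gradient_at_minimizer: "g xs = 0"
  using gradient minimizer by (rule gradient_zero_at_minimum)

lemma interpolation: "f v \<le> f u + g v \<bullet> (v - u) - (norm (g u - g v))\<^sup>2 / (2 * L)"
  using convex gradient lipschitz L_pos by (rule smooth_convex_interpolation)

lemma initial_value_bound: "f (x 0) - f xs \<le> L / 2 * (norm (x 0 - xs))\<^sup>2"
  using lipschitz_gradient_upper_bound[OF gradient lipschitz, of "x 0" xs]
  by (simp add: gradient_at_minimizer)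

lemma gap_nonneg: "gap k \<ge> 0"
  using interpolation[of xs "x k"] by (simp add: gap_def gradient_at_minimizer)

lemma value_le_minimizer: "f u - f xs \<le> g u \<bullet> (u - xs) - (norm (g u))\<^sup>2 / (2 * L)"
  using interpolation[of u xs] by (simp add: gradient_at_minimizer)

lemma value_le_gap: "f u - f xs - gap m \<le> g u \<bullet> (u - y (Suc m)) - (norm (g u))\<^sup>2 / (2 * L)"
proof -
  have "g u \<bullet> (u - y (Suc m)) = g u \<bullet> (u - x m) + (g (x m) \<bullet> g u) / L"
    by (simp add: y_Suc inner_diff_right inner_commute algebra_simps)
  moreover have "(norm (g (x m) - g u))\<^sup>2 / (2 * L)
      = (norm (g (x m)))\<^sup>2 / (2 * L) - (g (x m) \<bullet> g u) / L + (norm (g u))\<^sup>2 / (2 * L)"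
    using L_pos norm_diff_scaleR_power2[of "g (x m)" 1 "g u"] by (simp add: inner_commute field_simps)
  ultimately show ?thesis
    using interpolation[of u "x m"] by (simp add: gap_def)
qed

text \<open>Instances: \<open>u = x (Suc m)\<close>, \<open>p = \<theta> (Suc m)\<close> for the potential decrease and
  \<open>u = xt (Suc m)\<close>, \<open>p = \<phi> (Suc m)\<close> for the final bound.\<close>

lemma weighted_value_bound:
  assumes "p > 0" and "p\<^sup>2 - p \<ge> 0"
  shows "p\<^sup>2 * (f u - f xs) \<le> p * (g u \<bullet> (p *\<^sub>R u - (p - 1) *\<^sub>R y (Suc m) - xs))
    - p\<^sup>2 * ((norm (g u))\<^sup>2 / (2 * L)) + (p\<^sup>2 - p) * gap m"
proof -
  define N where "N = (norm (g u))\<^sup>2 / (2 * L)"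
  have "p *\<^sub>R u - (p - 1) *\<^sub>R y (Suc m) - xs = (u - xs) + (p - 1) *\<^sub>R (u - y (Suc m))"
    by (simp add: algebra_simps)
  then have "p * (g u \<bullet> (p *\<^sub>R u - (p - 1) *\<^sub>R y (Suc m) - xs))
      = p * (g u \<bullet> (u - xs)) + (p\<^sup>2 - p) * (g u \<bullet> (u - y (Suc m)))"
    by (simp add: inner_add_right power2_eq_square algebra_simps)
  moreover have "p * (f u - f xs) \<le> p * (g u \<bullet> (u - xs) - N)"
    using value_le_minimizer \<open>p > 0\<close> unfolding N_def by (intro mult_left_mono) auto
  moreover have "(p\<^sup>2 - p) * (f u - f xs - gap m) \<le> (p\<^sup>2 - p) * (g u \<bullet> (u - y (Suc m)) - N)"
    using value_le_gap \<open>p\<^sup>2 - p \<ge> 0\<close> unfolding N_def by (intro mult_left_mono) auto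
  ultimately show ?thesis
    unfolding N_def[symmetric] by (simp add: algebra_simps)
qed

lemma z_0: "z 0 = x 0"
  by (simp add: z_def \<theta>_0)

lemma z_Suc_eq: "z (Suc k) = y (Suc k) + (\<theta> k - 1) *\<^sub>R (y (Suc k) - y k) + \<theta> k *\<^sub>R (y (Suc k) - x k)"
proof -
  have "\<theta> (Suc k) \<noteq> 0"
    using \<theta>_pos[of "Suc k"] by simp
  then have "\<theta> (Suc k) *\<^sub>R x (Suc k) = \<theta> (Suc k) *\<^sub>R y (Suc k)
      + (\<theta> k - 1) *\<^sub>R (y (Suc k) - y k) + \<theta> k *\<^sub>R (y (Suc k) - x k)"
    by (simp add: x_Suc scaleR_add_right)
  then show ?thesis
    by (simp add: z_def algebra_simps)
qed

lemma z_Suc: "z (Suc k) = z k - (2 * \<theta> k / L) *\<^sub>R g (x k)"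
  unfolding z_Suc_eq by (simp add: z_def y_Suc algebra_simps) (simp flip: scaleR_add_left)

lemma potential_0_le: "potential 0 \<le> L / 2 * (norm (x 0 - xs))\<^sup>2"
proof -
  define N where "N = (norm (g (x 0)))\<^sup>2 / (2 * L)"
  have z_1: "z (Suc 0) - xs = (x 0 - xs) - (2 / L) *\<^sub>R g (x 0)"
    by (simp add: z_Suc z_0 \<theta>_0 algebra_simps)
  have "L / 2 * (norm (z (Suc 0) - xs))\<^sup>2
      = L / 2 * (norm (x 0 - xs))\<^sup>2 - 2 * (g (x 0) \<bullet> (x 0 - xs)) + 2\<^sup>2 * N"
    unfolding z_1 N_def using L_pos by (intro norm_gradient_step_power2) simp
  moreover have "gap 0 \<le> g (x 0) \<bullet> (x 0 - xs) - 2 * N"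
    using value_le_minimizer[of "x 0"] by (simp add: gap_def N_def)
  moreover have "potential 0 = 2 * gap 0 + L / 2 * (norm (z (Suc 0) - xs))\<^sup>2"
    by (simp add: potential_def \<theta>_0)
  ultimately show ?thesis
    unfolding power2_eq_square by linarith
qed

lemma potential_Suc_le: "potential (Suc k) \<le> potential k"
proof -
  define t where "t = \<theta> (Suc k)"
  define h where "h = g (x (Suc k))"
  define w where "w = z (Suc k) - xs"
  define N where "N = (norm h)\<^sup>2 / (2 * L)"
  have t: "t > 0" "0 \<le> t\<^sup>2 - t" "t\<^sup>2 - t \<le> (\<theta> k)\<^sup>2"
    using \<theta>_pos[of "Suc k"] \<theta>_Suc[of k] by (simp_all add: t_def)
  have z_Suc_Suc: "z (Suc (Suc k)) - xs = w - (2 * t / L) *\<^sub>R h"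
    by (simp add: z_Suc w_def h_def t_def algebra_simps)
  have "t\<^sup>2 * gap (Suc k) + 2 * (t\<^sup>2 * N) \<le> t * (h \<bullet> w) + (t\<^sup>2 - t) * gap k"
    using weighted_value_bound[OF t(1,2), of "x (Suc k)" k]
    by (simp add: gap_def N_def h_def w_def z_def t_def algebra_simps)
  moreover have "L / 2 * (norm (z (Suc (Suc k)) - xs))\<^sup>2
      = L / 2 * (norm w)\<^sup>2 - 2 * t * (h \<bullet> w) + (2 * t)\<^sup>2 * N"
    unfolding z_Suc_Suc N_def using L_pos by (intro norm_gradient_step_power2) simp
  moreover have "(2 * t)\<^sup>2 * N = 4 * (t\<^sup>2 * N)" and "2 * t * (h \<bullet> w) = 2 * (t * (h \<bullet> w))"
    by (simp_all add: power_mult_distrib)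
  moreover have "(t\<^sup>2 - t) * gap k \<le> (\<theta> k)\<^sup>2 * gap k"
    using t(3) gap_nonneg by (rule mult_right_mono)
  moreover have "potential (Suc k) = 2 * (t\<^sup>2 * gap (Suc k)) + L / 2 * (norm (z (Suc (Suc k)) - xs))\<^sup>2"
    by (simp add: potential_def t_def)
  moreover have "potential k = 2 * ((\<theta> k)\<^sup>2 * gap k) + L / 2 * (norm w)\<^sup>2"
    by (simp add: potential_def w_def)
  ultimately show ?thesis
    by linarith
qed

lemma potential_le: "potential k \<le> L / 2 * (norm (x 0 - xs))\<^sup>2"
proof (induction k)
  case 0
  show ?case by (rule potential_0_le)
next
  case (Suc k)
  then show ?case using potential_Suc_le[of k] by linarith
qed

lemma last_step_bound:
  assumes "p > 0" and "0 \<le> p\<^sup>2 - p" and "p\<^sup>2 - p \<le> 2 * (\<theta> m)\<^sup>2"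
    and u: "u = y (Suc m) + ((\<theta> m - 1) / p) *\<^sub>R (y (Suc m) - y m) + (\<theta> m / p) *\<^sub>R (y (Suc m) - x m)"
  shows "p\<^sup>2 * (f u - f xs) \<le> potential m"
proof -
  define h where "h = g u"
  define w where "w = z (Suc m) - xs"
  have "p *\<^sub>R u = p *\<^sub>R y (Suc m) + (\<theta> m - 1) *\<^sub>R (y (Suc m) - y m) + \<theta> m *\<^sub>R (y (Suc m) - x m)"
    using \<open>p > 0\<close> by (simp add: u scaleR_add_right)
  then have "z (Suc m) = p *\<^sub>R u - (p - 1) *\<^sub>R y (Suc m)"
    by (simp add: z_Suc_eq algebra_simps)
  then have "p\<^sup>2 * (f u - f xs) \<le> p * (h \<bullet> w) - p\<^sup>2 * ((norm h)\<^sup>2 / (2 * L)) + (p\<^sup>2 - p) * gap m"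
    using weighted_value_bound[OF assms(1,2), of u m] by (simp add: h_def w_def)
  moreover have "L / 2 * (norm (w - (p / L) *\<^sub>R h))\<^sup>2
      = L / 2 * (norm w)\<^sup>2 - p * (h \<bullet> w) + p\<^sup>2 * ((norm h)\<^sup>2 / (2 * L))"
    using L_pos by (intro norm_gradient_step_power2) simp
  moreover have "0 \<le> L / 2 * (norm (w - (p / L) *\<^sub>R h))\<^sup>2"
    using L_pos by simp
  moreover have "(p\<^sup>2 - p) * gap m \<le> 2 * (\<theta> m)\<^sup>2 * gap m"
    using assms(3) gap_nonneg by (rule mult_right_mono)
  ultimately show ?thesis
    unfolding potential_def w_def by linarith
qed

end

theorem theorem2:
  fixes f :: "real ^ 'n \<Rightarrow> real" and g :: "real ^ 'n \<Rightarrow> real ^ 'n"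
    and L :: real and xs :: "real ^ 'n"
    and \<theta> \<phi> :: "nat \<Rightarrow> real"
    and x y xt :: "nat \<Rightarrow> real ^ 'n"
  assumes cvx: "convex_on UNIV f"
    and grad: "\<And>z. (f has_derivative (\<lambda>h. g z \<bullet> h)) (at z)"
    and Lpos: "L > 0"
    and lip: "\<And>u v. norm (g u - g v) \<le> L * norm (u - v)"
    and minim: "\<And>z. f xs \<le> f z"
    and th_pos: "\<And>k. \<theta> k > 0"
    and th0: "\<theta> 0 = 1"
    and th_rec: "\<And>k. 0 \<le> (\<theta> (Suc k))\<^sup>2 - \<theta> (Suc k) \<and> (\<theta> (Suc k))\<^sup>2 - \<theta> (Suc k) \<le> (\<theta> k)\<^sup>2"
    and ph_pos: "\<And>k. \<phi> k > 0"
    and ph_rec: "\<And>k. 0 \<le> (\<phi> k)\<^sup>2 - \<phi> k \<and>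
                   (\<phi> k)\<^sup>2 - \<phi> k \<le> 2 * (if k = 0 then 0 else \<theta> (k - 1))\<^sup>2"
    and y0: "y 0 = x 0"
    and xt0: "xt 0 = x 0"
    and y_step: "\<And>k. y (Suc k) = x k - (1 / L) *\<^sub>R g (x k)"
    and x_step: "\<And>k. x (Suc k) = y (Suc k)
                  + ((\<theta> k - 1) / \<theta> (Suc k)) *\<^sub>R (y (Suc k) - y k)
                  + (\<theta> k / \<theta> (Suc k)) *\<^sub>R (y (Suc k) - x k)"
    and xt_step: "\<And>k. xt (Suc k) = y (Suc k)
                  + ((\<theta> k - 1) / \<phi> (Suc k)) *\<^sub>R (y (Suc k) - y k)
                  + (\<theta> k / \<phi> (Suc k)) *\<^sub>R (y (Suc k) - x k)"
  shows "f (xt k) - f xs \<le> L * (norm (x 0 - xs))\<^sup>2 / (2 * (\<phi> k)\<^sup>2)"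
proof -
  interpret ogm f g L xs \<theta> x y
    by unfold_locales (fact assms)+
  have "(\<phi> k)\<^sup>2 * (f (xt k) - f xs) \<le> L / 2 * (norm (x 0 - xs))\<^sup>2"
  proof (cases k)
    case 0
    have "\<phi> 0 = 1"
      using ph_rec[of 0] ph_pos[of 0] by (simp add: power2_eq_square)
    then show ?thesis
      using initial_value_bound by (simp add: 0 xt0)
  next
    case (Suc m)
    have "(\<phi> k)\<^sup>2 * (f (xt k) - f xs) \<le> potential m"
      using ph_rec[of k] by (intro last_step_bound ph_pos) (simp_all add: Suc xt_step)
    then show ?thesis
      using potential_le[of m] by linarith
  qed
  then show ?thesis
    using ph_pos[of k] by (simp add: pos_le_divide_eq field_simps)
qed

end
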